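(* Let $(V_k)_{k=1,\dots,K}$ be a $\sigma$-admissible family of affine spaces for some $\sigma>0$. For $w\in W$ let $u_k^*(w)$, $k=1,\dots,K$, be the PBDW estimators, and define $u^*(w)=u^*_{k^*}(w)$. (i) If $k^*=k^*(w)$ is any minimizer of $k\mapsto\operatorname{dist}(u_k^*(w),\mathcal M)$ over $\{1,\dots,K\}$, then $$\sup_{u\in\mathcal M}\|u-u^*(P_Wu)\|\le\delta_\sigma.$$ (ii) If $\mathcal S:V\to[0,\infty)$ satisfies $r\operatorname{dist}(v,\mathcal M)\le\mathcal S(v)\le R\operatorname{dist}(v,\mathcal M)$ for all $v\in V$ with constants $0<r\le R$, and $k^*=k^*(w)$ is any minimizer of $k\mapsto\mathcal S(u_k^*(w))$, then $$\sup_{u\in\mathcal M}\|u-u^*(P_Wu)\|\le\delta_{\kappa\sigma},\qquad\kappa=R/r.$$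
   Context: $V$ is a real Hilbert space, $\mathcal M\subset V$ is compact, $W\subset V$ is a subspace of finite dimension $m$, $P_W$ is the orthogonal projection onto $W$ and $W^\perp$ its orthogonal complement. For a linear subspace $\bar V$ with $\bar V\cap W^\perp=\{0\}$, $\mu(\bar V,W)=\max_{v\in\bar V,\,v\ne0}\|v\|/\|P_Wv\|$ (set $\mu(\{0\},W)=1$). A family of affine spaces $V_k=\bar u_k+\bar V_k$ ($\bar u_k\in V$, $\bar V_k$ linear of dimension $n_k\le m$, $\bar V_k\cap W^\perp=\{0\}$), $k=1,\dots,K$, is $\sigma$-admissible if there is a partition $\mathcal M=\bigcup_{k=1}^K\mathcal M_k$ and numbers $\varepsilon_k$ with $\operatorname{dist}(\mathcal M_k,V_k):=\sup_{u\in\mathcal M_k}\operatorname{dist}(u,V_k)\le\varepsilon_k$ and $\mu(\bar V_k,W)\,\varepsilon_k\le\sigma$ for all $k$. The PBDW estimators are $u_k^*(w)=\operatorname{argmin}\{\operatorname{dist}(v,V_k): v\in w+W^\perp\}$. For $\sigma\ge0$, $\mathcal M_\sigma=\{v\in V:\operatorname{dist}(v,\mathcal M)\le\sigma\}$ and $\delta_\sigma=\sup\{\|u-v\|: u,v\in\mathcal M_\sigma,\ u-v\in W^\perp\}$. *)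

theory Defs
  imports "HOL-Analysis.Analysis"
begin

(* V is modelled by a type 'a :: {real_inner, complete_space} (real Hilbert space). *)

definition fin_dim_subspace :: "'a::real_vector set \<Rightarrow> nat \<Rightarrow> bool" where
  "fin_dim_subspace S n \<longleftrightarrow> subspace S \<and>
     (\<exists>B. finite B \<and> independent B \<and> span B = S \<and> card B = n)"

definition orth_proj :: "'a::real_inner set \<Rightarrow> 'a \<Rightarrow> 'a" where
  "orth_proj W v = (THE w. w \<in> W \<and> v - w \<in> orthogonal_comp W)"

definition mu :: "'a::real_inner set \<Rightarrow> 'a set \<Rightarrow> real" where
  "mu Vb W = (if Vb = {0} then 1
     else Sup {norm v / norm (orth_proj W v) | v. v \<in> Vb \<and> v \<noteq> 0})"

(* sigma-admissible family V_k = ubar k + Vbar k, k = 1..K *)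
definition sigma_admissible ::
  "'a::real_inner set \<Rightarrow> 'a set \<Rightarrow> nat \<Rightarrow> (nat \<Rightarrow> 'a) \<Rightarrow> (nat \<Rightarrow> 'a set) \<Rightarrow> real \<Rightarrow> bool" where
  "sigma_admissible M W K ubar Vbar \<sigma> \<longleftrightarrow>
     (\<exists>m. fin_dim_subspace W m \<and>
        (\<forall>k\<in>{1..K}. (\<exists>n\<le>m. fin_dim_subspace (Vbar k) n) \<and>
                     Vbar k \<inter> orthogonal_comp W = {0})) \<and>
     (\<exists>Mk :: nat \<Rightarrow> 'a set. \<exists>eps :: nat \<Rightarrow> real.
        (\<Union>k\<in>{1..K}. Mk k) = M \<and> disjoint_family_on Mk {1..K} \<and>
        (\<forall>k\<in>{1..K}. (\<forall>u\<in>Mk k. infdist u ((\<lambda>x. ubar k + x) ` Vbar k) \<le> eps k) \<and>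
                     mu (Vbar k) W * eps k \<le> \<sigma>))"

definition is_PBDW :: "'a::real_inner set \<Rightarrow> 'a set \<Rightarrow> 'a \<Rightarrow> 'a \<Rightarrow> bool" where
  "is_PBDW W Vk w x \<longleftrightarrow> x \<in> (\<lambda>y. w + y) ` orthogonal_comp W \<and>
     (\<forall>v\<in>(\<lambda>y. w + y) ` orthogonal_comp W. infdist x Vk \<le> infdist v Vk)"

definition M_sigma :: "'a::metric_space set \<Rightarrow> real \<Rightarrow> 'a set" where
  "M_sigma M \<sigma> = {v. infdist v M \<le> \<sigma>}"

definition delta :: "'a::real_inner set \<Rightarrow> 'a set \<Rightarrow> real \<Rightarrow> real" where
  "delta M W \<sigma> = Sup {norm (u - v) | u v. u \<in> M_sigma M \<sigma> \<and> v \<in> M_sigma M \<sigma> \<and>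
                                         u - v \<in> orthogonal_comp W}"

end

(* Every u in M lies in some piece M_k, and for that k the PBDW estimator built from the data
   P_W u has error at most mu(Vbar_k, W) dist(u, V_k) <= sigma. Hence some candidate estimator
   lies in M_sigma, and a selection that (quasi-)minimises the distance to M still picks an
   estimator u^* with dist(u^*, M) <= kappa sigma. Since every PBDW estimator reproduces the
   data, u - u^* lies in W^perp, so the distance between u and u^* is one of the numbers whose
   supremum is delta_(kappa sigma). *)

theory Submission
  imports Defs
begin

text \<open>HOL-Analysis proves Gram--Schmidt only for \<open>euclidean_space\<close>; here the ambient space is an
  arbitrary real inner product space, so the finite-dimensional facts are derived anew.\<close>
lemma Gram_Schmidt_step_finite:
  fixes S :: "'a::real_inner set"
  assumes "finite S" "pairwise orthogonal S" "x \<in> span S"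
  shows "orthogonal x (a - (\<Sum>b\<in>S. (b \<bullet> a / (b \<bullet> b)) *\<^sub>R b))"
proof -
  have "orthogonal (a - (\<Sum>b\<in>S. (b \<bullet> a / (b \<bullet> b)) *\<^sub>R b)) y" if "y \<in> S" for y
  proof -
    have "a \<bullet> y = (\<Sum>b\<in>S. if b = y then b \<bullet> a else 0)"
      using assms(1) that by (simp add: inner_commute)
    also have "\<dots> = (\<Sum>b\<in>S. b \<bullet> a * (b \<bullet> y) / (b \<bullet> b))"
      using assms(2) that by (intro sum.cong) (auto simp: pairwise_def orthogonal_def)
    finally show ?thesis
      by (simp add: orthogonal_def algebra_simps inner_sum_left)
  qed
  then show ?thesis
    using orthogonal_to_span orthogonal_commute assms(3) by blast
qed

lemma orthogonal_expansion:
  fixes U :: "'a::real_inner set"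
  assumes "finite U" "pairwise orthogonal U" "z \<in> span U"
  shows "z = (\<Sum>b\<in>U. (b \<bullet> z / (b \<bullet> b)) *\<^sub>R b)"
proof -
  have "z - (\<Sum>b\<in>U. (b \<bullet> z / (b \<bullet> b)) *\<^sub>R b) \<in> span U"
    using assms(3) by (simp add: span_diff span_sum span_mul span_base)
  from Gram_Schmidt_step_finite[OF assms(1,2) this, of z] show ?thesis
    by (simp add: orthogonal_def)
qed

lemma orthogonal_basis_of_span:
  fixes T :: "'a::real_inner set"
  assumes "finite T"
  obtains U where "finite U" "pairwise orthogonal U" "span U = span T"
proof -
  have "\<exists>U. finite U \<and> pairwise orthogonal U \<and> span U = span T"
    using assms
  proof (induction T)
    case empty
    show ?case by (rule exI[of _ "{}"]) simp
  next
    case (insert a T)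
    then obtain U where U: "finite U" "pairwise orthogonal U" "span U = span T"
      by blast
    define a' where "a' = a - (\<Sum>b\<in>U. (b \<bullet> a / (b \<bullet> b)) *\<^sub>R b)"
    have "orthogonal b a'" if "b \<in> U" for b
      using Gram_Schmidt_step_finite[OF U(1,2)] that span_base a'_def by blast
    then have orth: "pairwise orthogonal (insert a' U)"
      using U(2) by (auto simp: pairwise_insert orthogonal_commute)
    have "a - a' \<in> span U"
      unfolding a'_def by (simp add: span_sum span_mul span_base)
    then have "span (insert a' U) = span (insert a U)"
      by (metis eq_span_insert_eq)
    also have "\<dots> = span (insert a T)"
      using U(3) by (simp add: span_insert)
    finally have "span (insert a' U) = span (insert a T)" .
    then show ?case
      using U(1) orth by blast
  qed
  then show ?thesis
    using that by blast
qed

lemma orthogonal_projection_unique: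
  fixes W :: "'a::real_inner set"
  assumes "subspace W" "w1 \<in> W" "v - w1 \<in> orthogonal_comp W" "w2 \<in> W" "v - w2 \<in> orthogonal_comp W"
  shows "w1 = w2"
proof -
  have "w1 - w2 \<in> W"
    using assms by (simp add: subspace_diff)
  moreover have "w1 - w2 \<in> orthogonal_comp W"
    using assms(3,5) subspace_diff[OF subspace_orthogonal_comp] by fastforce
  ultimately show ?thesis
    by (auto simp: orthogonal_comp_def orthogonal_self)
qed

lemma norm_le_if_orthogonal_remainder:
  fixes v p y :: "'a::real_inner"
  assumes "orthogonal (v - p) (p - y)"
  shows "norm (v - p) \<le> norm (v - y)"
proof -
  have "(v - p) + (p - y) = v - y"
    by simp
  then have "(norm (v - y))\<^sup>2 = (norm (v - p))\<^sup>2 + (norm (p - y))\<^sup>2"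
    using norm_add_Pythagorean[OF assms] by simp
  then have "(norm (v - p))\<^sup>2 \<le> (norm (v - y))\<^sup>2"
    by simp
  then show ?thesis
    by (rule power2_le_imp_le) simp
qed

lemma inner_eq_0_if_norm_le_translates:
  fixes p q :: "'a::real_inner"
  assumes "\<And>t. norm p \<le> norm (p - t *\<^sub>R q)"
  shows "p \<bullet> q = 0"
proof (cases "q = 0")
  case False
  define t where "t = (p \<bullet> q) / (q \<bullet> q)"
  have "p \<bullet> p \<le> (p - t *\<^sub>R q) \<bullet> (p - t *\<^sub>R q)"
    using assms[of t] by (simp add: power_mono flip: power2_norm_eq_inner)
  also have "\<dots> = p \<bullet> p - (p \<bullet> q) * (p \<bullet> q) / (q \<bullet> q)"
    using False by (simp add: t_def inner_diff_left inner_diff_right inner_commute field_simps power2_eq_square)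
  finally have "(p \<bullet> q) * (p \<bullet> q) / (q \<bullet> q) \<le> 0"
    by simp
  moreover have "0 < q \<bullet> q"
    using False by simp
  ultimately have "(p \<bullet> q) * (p \<bullet> q) \<le> 0"
    by (simp add: divide_le_0_iff)
  then show ?thesis
    by (simp add: mult_le_0_iff) linarith
qed simp

text \<open>This is Cauchy--Schwarz in the plane, applied to \<open>(1, s)\<close> and \<open>(b, a)\<close> with \<open>s\<^sup>2 = \<mu>\<^sup>2 - 1\<close>.\<close>
lemma add_le_mult_sqrt_sum_squares:
  fixes a b X \<mu> :: real
  assumes "0 \<le> a" "0 \<le> b" "0 \<le> X" "1 \<le> \<mu>" "X\<^sup>2 \<le> (\<mu>\<^sup>2 - 1) * a\<^sup>2"
  shows "b + X \<le> \<mu> * sqrt (a\<^sup>2 + b\<^sup>2)"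
proof -
  define s where "s = sqrt (\<mu>\<^sup>2 - 1)"
  have s: "0 \<le> s" "s\<^sup>2 = \<mu>\<^sup>2 - 1"
    using assms(4) by (simp_all add: s_def one_le_power)
  have "X\<^sup>2 \<le> (s * a)\<^sup>2"
    using assms(5) s(2) by (simp add: power_mult_distrib)
  then have "X \<le> s * a"
    using power2_le_imp_le mult_nonneg_nonneg[OF s(1) assms(1)] by blast
  then have "(b + X)\<^sup>2 \<le> (b + s * a)\<^sup>2"
    using assms(2,3) by (simp add: power_mono)
  also have "\<dots> \<le> (1 + s\<^sup>2) * (a\<^sup>2 + b\<^sup>2)"
    using zero_le_power2[of "s * b - a"] by (simp add: power2_eq_square algebra_simps)
  also have "\<dots> = (\<mu> * sqrt (a\<^sup>2 + b\<^sup>2))\<^sup>2"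
    using s(2) by (simp add: power_mult_distrib)
  finally have "(b + X)\<^sup>2 \<le> (\<mu> * sqrt (a\<^sup>2 + b\<^sup>2))\<^sup>2" .
  moreover have "0 \<le> \<mu> * sqrt (a\<^sup>2 + b\<^sup>2)"
    using assms(4) by simp
  ultimately show ?thesis
    by (rule power2_le_imp_le)
qed

lemma le_infdist:
  assumes "A \<noteq> {}" "\<And>a. a \<in> A \<Longrightarrow> c \<le> dist x a"
  shows "c \<le> infdist x A"
  unfolding infdist_notempty[OF assms(1)] using assms by (intro cINF_greatest)

lemma bounded_M_sigma:
  assumes "bounded M" "M \<noteq> {}"
  shows "bounded (M_sigma M s)"
proof -
  obtain c \<rho> where M: "M \<subseteq> cball c \<rho>"
    using assms(1) bounded_subset_cball by blast
  have "dist v c \<le> \<rho> + s" if "v \<in> M_sigma M s" for v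
  proof -
    have "dist v c - \<rho> \<le> infdist v M"
    proof (rule le_infdist[OF assms(2)])
      fix a assume "a \<in> M"
      then have "dist a c \<le> \<rho>"
        using M by (auto simp: dist_commute)
      then show "dist v c - \<rho> \<le> dist v a"
        using dist_triangle[of v c a] by linarith
    qed
    then show ?thesis
      using that by (simp add: M_sigma_def)
  qed
  then have "M_sigma M s \<subseteq> cball c (\<rho> + s)"
    by (simp add: subset_iff dist_commute)
  then show ?thesis
    by (rule bounded_subset[OF bounded_cball])
qed

lemma norm_le_delta:
  assumes "compact M" "u \<in> M" "infdist x M \<le> s" "u - x \<in> orthogonal_comp W"
  shows "norm (u - x) \<le> delta M W s"
proof -
  let ?D = "{norm (y - z) | y z. y \<in> M_sigma M s \<and> z \<in> M_sigma M s \<and> y - z \<in> orthogonal_comp W}"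
  have "bounded (M_sigma M s)"
    using assms(1,2) by (intro bounded_M_sigma compact_imp_bounded) auto
  then obtain b where b: "\<And>y. y \<in> M_sigma M s \<Longrightarrow> norm y \<le> b"
    unfolding bounded_iff by blast
  have "bdd_above ?D"
  proof (rule bdd_aboveI)
    fix t assume "t \<in> ?D"
    then obtain y z where "t = norm (y - z)" "y \<in> M_sigma M s" "z \<in> M_sigma M s"
      by blast
    then show "t \<le> 2 * b"
      using b[of y] b[of z] norm_triangle_ineq4[of y z] by linarith
  qed
  have "u \<in> M_sigma M s" "x \<in> M_sigma M s"
    using assms(2,3) infdist_nonneg[of x M] by (simp_all add: M_sigma_def)
  then have "norm (u - x) \<in> ?D"
    using assms(4) by blast
  then show ?thesis
    unfolding delta_def using \<open>bdd_above ?D\<close> by (rule cSup_upper)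
qed

lemma sigma_admissible_finite_span:
  assumes "sigma_admissible M W K ubar Vbar \<sigma>"
  obtains T where "finite T" "W = span T"
proof -
  obtain m where "fin_dim_subspace W m"
    using assms unfolding sigma_admissible_def by (elim conjE exE) blast
  then obtain T where "finite T" "span T = W"
    unfolding fin_dim_subspace_def by blast
  then show ?thesis
    using that by simp
qed

locale finite_dimensional_subspace =
  fixes W :: "'a::real_inner set" and T :: "'a set"
  assumes finite_spanning_set: "finite T" and span_spanning_set: "W = span T"
begin

lemma subspace_W: "subspace W"
  using span_spanning_set by simp

lemma orth_proj_characterization: "orth_proj W v \<in> W \<and> v - orth_proj W v \<in> orthogonal_comp W"
proof -
  obtain U where U: "finite U" "pairwise orthogonal U" "span U = W"
    using orthogonal_basis_of_span finite_spanning_set span_spanning_set by metis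
  define p where "p = (\<Sum>b\<in>U. (b \<bullet> v / (b \<bullet> b)) *\<^sub>R b)"
  have "p \<in> W"
    unfolding p_def U(3)[symmetric] by (intro span_sum span_mul span_base)
  moreover have "v - p \<in> orthogonal_comp W"
    using Gram_Schmidt_step_finite[OF U(1,2)] U(3)
    by (auto simp: p_def orthogonal_comp_def orthogonal_commute)
  ultimately have "\<exists>!w. w \<in> W \<and> v - w \<in> orthogonal_comp W"
    using orthogonal_projection_unique[OF subspace_W] by blast
  then show ?thesis
    unfolding orth_proj_def by (rule theI')
qed

lemma orth_proj_in: "orth_proj W v \<in> W"
  using orth_proj_characterization by blast

lemma orth_proj_perp: "v - orth_proj W v \<in> orthogonal_comp W"
  using orth_proj_characterization by blast

lemma orth_proj_eqI: "w \<in> W \<Longrightarrow> v - w \<in> orthogonal_comp W \<Longrightarrow> orth_proj W v = w"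
  using orthogonal_projection_unique[OF subspace_W] orth_proj_in orth_proj_perp by blast

lemma linear_orth_proj: "linear (orth_proj W)"
proof (rule linearI)
  fix x y
  have "x + y - (orth_proj W x + orth_proj W y) = (x - orth_proj W x) + (y - orth_proj W y)"
    by simp
  then show "orth_proj W (x + y) = orth_proj W x + orth_proj W y"
    using orth_proj_in orth_proj_perp subspace_W subspace_orthogonal_comp
    by (metis orth_proj_eqI subspace_add)
next
  fix c :: real and x
  have "c *\<^sub>R x - c *\<^sub>R orth_proj W x = c *\<^sub>R (x - orth_proj W x)"
    by (simp add: algebra_simps)
  then show "orth_proj W (c *\<^sub>R x) = c *\<^sub>R orth_proj W x"
    using orth_proj_in orth_proj_perp subspace_W subspace_orthogonal_comp
    by (metis orth_proj_eqI subspace_scale)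
qed

lemma orth_proj_diff: "orth_proj W (x - y) = orth_proj W x - orth_proj W y"
  using linear_orth_proj by (rule linear_diff)

lemma orth_proj_eq_0_iff: "orth_proj W v = 0 \<longleftrightarrow> v \<in> orthogonal_comp W"
  using orth_proj_perp[of v] orth_proj_eqI[of 0 v] subspace_0[OF subspace_W] by auto

lemma norm_orth_proj_Pythagorean:
  "(norm v)\<^sup>2 = (norm (orth_proj W v))\<^sup>2 + (norm (v - orth_proj W v))\<^sup>2"
proof -
  have "orthogonal (orth_proj W v) (v - orth_proj W v)"
    using orth_proj_in orth_proj_perp by (auto simp: orthogonal_comp_def)
  then show ?thesis
    using norm_add_Pythagorean by fastforce
qed

lemma norm_orth_proj_le: "norm (orth_proj W v) \<le> norm v"
proof -
  have "(norm (orth_proj W v))\<^sup>2 \<le> (norm v)\<^sup>2"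
    using norm_orth_proj_Pythagorean[of v] by simp
  then show ?thesis
    by (rule power2_le_imp_le) simp
qed

lemma orth_proj_best_approximation:
  assumes "y \<in> W"
  shows "norm (v - orth_proj W v) \<le> norm (v - y)"
proof -
  have "orth_proj W v - y \<in> W"
    using assms orth_proj_in subspace_W by (simp add: subspace_diff)
  then have "orthogonal (v - orth_proj W v) (orth_proj W v - y)"
    using orth_proj_perp orthogonal_commute by (auto simp: orthogonal_comp_def)
  then show ?thesis
    by (rule norm_le_if_orthogonal_remainder)
qed

lemma closest_point_translate:
  obtains v where "v \<in> (+) a ` W" "\<And>v'. v' \<in> (+) a ` W \<Longrightarrow> norm (x - v) \<le> norm (x - v')"
proof
  show "a + orth_proj W (x - a) \<in> (+) a ` W"
    using orth_proj_in by blast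
  fix v' assume "v' \<in> (+) a ` W"
  then obtain z where "z \<in> W" "v' = a + z"
    by blast
  moreover have "x - (a + orth_proj W (x - a)) = (x - a) - orth_proj W (x - a)"
    by simp
  ultimately show "norm (x - (a + orth_proj W (x - a))) \<le> norm (x - v')"
    using orth_proj_best_approximation[of z "x - a"] by (simp add: diff_diff_eq)
qed

lemma orth_proj_bounded_below:
  assumes "finite B" "V = span B" "V \<inter> orthogonal_comp W = {0}"
  obtains C where "\<And>d. d \<in> V \<Longrightarrow> norm d \<le> C * norm (orth_proj W d)"
proof -
  let ?P = "orth_proj W"
  obtain U where U: "finite U" "pairwise orthogonal U" "span U = span (?P ` B)"
    using orthogonal_basis_of_span[OF finite_imageI[OF assms(1)]] by blast
  have span_U: "span U = ?P ` V"
    unfolding U(3) assms(2) by (rule span_linear_image[OF linear_orth_proj])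
  have "\<forall>e\<in>U. \<exists>d\<in>V. ?P d = e"
    using span_base[of _ U] unfolding span_U by blast
  then obtain g where g: "\<And>e. e \<in> U \<Longrightarrow> g e \<in> V \<and> ?P (g e) = e"
    by metis
  have "norm d \<le> (\<Sum>e\<in>U. norm (g e) / norm e) * norm (?P d)" if d: "d \<in> V" for d
  proof -
    define c where "c e = e \<bullet> ?P d / (e \<bullet> e)" for e
    define d' where "d' = (\<Sum>e\<in>U. c e *\<^sub>R g e)"
    have sub_V: "subspace V"
      using assms(2) by simp
    have "?P d' = (\<Sum>e\<in>U. c e *\<^sub>R e)"
      unfolding d'_def using g by (simp add: linear_sum[OF linear_orth_proj] linear_scale[OF linear_orth_proj])
    also have "\<dots> = ?P d"
      unfolding c_def using d span_U by (intro orthogonal_expansion[OF U(1,2), symmetric]) blast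
    finally have "?P (d - d') = 0"
      by (simp add: orth_proj_diff)
    then have "d - d' \<in> orthogonal_comp W"
      using orth_proj_eq_0_iff by blast
    moreover have "d' \<in> V"
      unfolding d'_def using g by (intro subspace_sum[OF sub_V] subspace_scale[OF sub_V]) blast
    then have "d - d' \<in> V"
      using d sub_V by (simp add: subspace_diff)
    ultimately have "d - d' \<in> V \<inter> orthogonal_comp W"
      by blast
    then have "d = d'"
      unfolding assms(3) by simp
    then have "norm d \<le> (\<Sum>e\<in>U. \<bar>c e\<bar> * norm (g e))"
      unfolding d'_def by (metis (no_types, lifting) norm_scaleR norm_sum sum.cong)
    also have "\<dots> \<le> (\<Sum>e\<in>U. norm (g e) / norm e * norm (?P d))"
    proof (rule sum_mono)
      fix e
      have "\<bar>e \<bullet> ?P d\<bar> \<le> norm e * norm (?P d)"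
        by (rule Cauchy_Schwarz_ineq2)
      then have "\<bar>c e\<bar> \<le> norm (?P d) / norm e"
        by (cases "e = 0") (simp_all add: c_def abs_div field_simps power2_eq_square flip: power2_norm_eq_inner)
      from mult_right_mono[OF this norm_ge_zero[of "g e"]]
      show "\<bar>c e\<bar> * norm (g e) \<le> norm (g e) / norm e * norm (?P d)"
        by (simp add: mult.commute)
    qed
    also have "\<dots> = (\<Sum>e\<in>U. norm (g e) / norm e) * norm (?P d)"
      by (rule sum_distrib_right[symmetric])
    finally show ?thesis .
  qed
  then show ?thesis
    using that by blast
qed

lemma mu_bounds:
  assumes "finite B" "V = span B" "V \<inter> orthogonal_comp W = {0}"
  shows norm_le_mu_orth_proj: "\<And>d. d \<in> V \<Longrightarrow> norm d \<le> mu V W * norm (orth_proj W d)"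
    and mu_ge_1: "1 \<le> mu V W"
proof -
  let ?P = "orth_proj W"
  let ?Q = "{norm v / norm (?P v) | v. v \<in> V \<and> v \<noteq> 0}"
  obtain C where C: "\<And>d. d \<in> V \<Longrightarrow> norm d \<le> C * norm (?P d)"
    using orth_proj_bounded_below[OF assms] by blast
  have P_pos: "0 < norm (?P v)" if "v \<in> V" "v \<noteq> 0" for v
    using that assms(3) orth_proj_eq_0_iff by auto
  have bdd: "bdd_above ?Q"
    using C P_pos by (fastforce intro!: bdd_aboveI[of _ C] simp: divide_le_eq)
  have quotient_le_mu: "norm v / norm (?P v) \<le> mu V W" if "v \<in> V" "v \<noteq> 0" for v
    using that bdd by (auto simp: mu_def intro!: cSup_upper)
  show "norm d \<le> mu V W * norm (?P d)" if "d \<in> V" for d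
    using quotient_le_mu[OF that] P_pos[OF that]
    by (cases "d = 0") (simp_all add: divide_le_eq mult.commute linear_0[OF linear_orth_proj])
  show "1 \<le> mu V W"
  proof (cases "V = {0}")
    case False
    moreover have "0 \<in> V"
      using assms(2) by (simp add: span_zero)
    ultimately obtain v where "v \<in> V" "v \<noteq> 0"
      by blast
    then show ?thesis
      using quotient_le_mu P_pos norm_orth_proj_le[of v] by (smt (verit) le_divide_eq_1_pos)
  qed (simp add: mu_def)
qed

lemma PBDW_residual_orthogonal:
  assumes "is_PBDW W V (orth_proj W u) x"
  shows "u - x \<in> orthogonal_comp W"
proof -
  obtain y where y: "y \<in> orthogonal_comp W" "x = orth_proj W u + y"
    using assms unfolding is_PBDW_def by blast
  then have "u - x = (u - orth_proj W u) - y"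
    by simp
  then show ?thesis
    using orth_proj_perp y(1) by (metis subspace_diff subspace_orthogonal_comp)
qed

lemma PBDW_infdist_le:
  assumes "is_PBDW W V (orth_proj W u) x" "v \<in> V"
  shows "infdist x V \<le> norm (orth_proj W (u - v))"
proof -
  let ?x' = "orth_proj W u + (v - orth_proj W v)"
  have "?x' \<in> (+) (orth_proj W u) ` orthogonal_comp W"
    using orth_proj_perp by blast
  then have "infdist x V \<le> infdist ?x' V"
    using assms(1) unfolding is_PBDW_def by blast
  also have "\<dots> \<le> dist ?x' v"
    using assms(2) by (rule infdist_le)
  also have "\<dots> = norm (orth_proj W (u - v))"
    by (simp add: dist_norm orth_proj_diff algebra_simps)
  finally show ?thesis .
qed

lemma PBDW_decomposition:
  assumes "finite B" "is_PBDW W ((+) a ` span B) (orth_proj W u) x"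
  obtains v where "v \<in> (+) a ` span B" "x = v + orth_proj W (u - v)"
    "\<And>v'. v' \<in> (+) a ` span B \<Longrightarrow> norm (orth_proj W (u - v)) \<le> norm (orth_proj W (u - v'))"
proof -
  interpret V: finite_dimensional_subspace "span B" B
    using assms(1) by unfold_locales simp_all
  obtain v where v: "v \<in> (+) a ` span B"
    and closest: "\<And>v'. v' \<in> (+) a ` span B \<Longrightarrow> norm (x - v) \<le> norm (x - v')"
    using V.closest_point_translate by blast
  have "norm (x - v) \<le> infdist x ((+) a ` span B)"
    using v closest by (intro le_infdist) (auto simp: dist_norm)
  then have fit: "norm (x - v) \<le> norm (orth_proj W (u - v'))" if "v' \<in> (+) a ` span B" for v'
    using PBDW_infdist_le[OF assms(2) that] by linarith
  have same_data: "orth_proj W (x - v) = orth_proj W (u - v)"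
    using PBDW_residual_orthogonal[OF assms(2)]
    by (simp add: orth_proj_diff flip: orth_proj_eq_0_iff)
  have "norm (x - v) \<le> norm (orth_proj W (x - v))"
    using fit[OF v] same_data by simp
  then have "(norm (x - v))\<^sup>2 \<le> (norm (orth_proj W (x - v)))\<^sup>2"
    by (simp add: power_mono)
  then have "x - v - orth_proj W (x - v) = 0"
    using norm_orth_proj_Pythagorean[of "x - v"] by simp
  then have "x = v + orth_proj W (u - v)"
    using same_data by (simp add: algebra_simps)
  moreover have "norm (orth_proj W (u - v)) \<le> norm (orth_proj W (u - v'))" if "v' \<in> (+) a ` span B" for v'
    using fit[OF that] norm_orth_proj_le[of "x - v"] unfolding same_data by linarith
  ultimately show ?thesis
    using that v by blast
qed

text \<open>Here \<open>v + P\<^sub>W(u - v)\<close> is the PBDW estimator and \<open>v\<^sub>0 \<in> V\<close> is arbitrary. Splitting \<open>u - v\<^sub>0\<close> into its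
  \<open>W\<close>-component \<open>p - q\<close> and the rest \<open>r\<close>, the error is \<open>r + (d - P\<^sub>W d)\<close> with \<open>d = v\<^sub>0 - v\<close>; the definition
  of \<open>\<mu>\<close> controls \<open>d - P\<^sub>W d\<close> by \<open>P\<^sub>W d = q\<close>, and \<open>\<parallel>q\<parallel> \<le> \<parallel>p - q\<parallel>\<close> because \<open>p \<bottom> q\<close>.\<close>
lemma PBDW_error_le_mu_dist:
  assumes "finite B" "span B \<inter> orthogonal_comp W = {0}"
    and "v \<in> (+) a ` span B" "v0 \<in> (+) a ` span B"
    and "\<And>d. d \<in> span B \<Longrightarrow> orth_proj W (u - v) \<bullet> orth_proj W d = 0"
  shows "norm (u - (v + orth_proj W (u - v))) \<le> mu (span B) W * norm (u - v0)"
proof -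
  define p where "p = orth_proj W (u - v)"
  define d where "d = v0 - v"
  define q where "q = orth_proj W d"
  define r where "r = (u - v0) - orth_proj W (u - v0)"
  define \<mu> where "\<mu> = mu (span B) W"
  have d: "d \<in> span B"
    using assms(3,4) by (auto simp: d_def span_diff)
  have W_part: "orth_proj W (u - v0) = p - q"
    unfolding p_def q_def d_def by (simp add: orth_proj_diff)
  have u_v0: "(norm (u - v0))\<^sup>2 = (norm (p - q))\<^sup>2 + (norm r)\<^sup>2"
    using norm_orth_proj_Pythagorean[of "u - v0"] by (simp add: W_part r_def)
  have "orthogonal p (- q)"
    using assms(5)[OF d] by (simp add: orthogonal_def p_def q_def)
  then have "(norm (p - q))\<^sup>2 = (norm p)\<^sup>2 + (norm q)\<^sup>2"
    using norm_add_Pythagorean[of p "- q"] by simp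
  then have q_le: "(norm q)\<^sup>2 \<le> (norm (p - q))\<^sup>2"
    by simp
  have "norm d \<le> \<mu> * norm q"
    unfolding \<mu>_def q_def using norm_le_mu_orth_proj[OF assms(1) refl assms(2) d] .
  then have "(norm d)\<^sup>2 \<le> \<mu>\<^sup>2 * (norm q)\<^sup>2"
    by (simp add: power_mono flip: power_mult_distrib)
  then have "(norm (d - q))\<^sup>2 \<le> (\<mu>\<^sup>2 - 1) * (norm q)\<^sup>2"
    using norm_orth_proj_Pythagorean[of d] by (simp add: q_def algebra_simps)
  also have "\<dots> \<le> (\<mu>\<^sup>2 - 1) * (norm (p - q))\<^sup>2"
    using q_le mu_ge_1[OF assms(1) refl assms(2)]
    by (intro mult_left_mono) (simp_all add: \<mu>_def one_le_power)
  finally have "norm r + norm (d - q) \<le> \<mu> * sqrt ((norm (p - q))\<^sup>2 + (norm r)\<^sup>2)"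
    using mu_ge_1[OF assms(1) refl assms(2)]
    by (intro add_le_mult_sqrt_sum_squares) (simp_all add: \<mu>_def)
  also have "sqrt ((norm (p - q))\<^sup>2 + (norm r)\<^sup>2) = norm (u - v0)"
    using u_v0 by (intro real_sqrt_unique) simp_all
  finally have "norm r + norm (d - q) \<le> \<mu> * norm (u - v0)" .
  moreover have "u - (v + p) = r + (d - q)"
    unfolding r_def W_part d_def by (simp add: algebra_simps)
  ultimately show ?thesis
    using norm_triangle_ineq[of r "d - q"] by (simp add: p_def \<mu>_def)
qed

theorem PBDW_error_bound:
  assumes "finite B" "span B \<inter> orthogonal_comp W = {0}"
    and "is_PBDW W ((+) a ` span B) (orth_proj W u) x"
  shows "norm (u - x) \<le> mu (span B) W * infdist u ((+) a ` span B)"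
proof -
  obtain v where v: "v \<in> (+) a ` span B" and x: "x = v + orth_proj W (u - v)"
    and best: "\<And>v'. v' \<in> (+) a ` span B \<Longrightarrow> norm (orth_proj W (u - v)) \<le> norm (orth_proj W (u - v'))"
    using PBDW_decomposition[OF assms(1,3)] by blast
  have "orth_proj W (u - v) \<bullet> orth_proj W d = 0" if d: "d \<in> span B" for d
  proof (rule inner_eq_0_if_norm_le_translates)
    fix t
    have "v + t *\<^sub>R d \<in> (+) a ` span B"
      using v d by (auto simp: span_add span_mul add.assoc)
    from best[OF this]
    show "norm (orth_proj W (u - v)) \<le> norm (orth_proj W (u - v) - t *\<^sub>R orth_proj W d)"
      by (simp add: orth_proj_diff linear_add[OF linear_orth_proj] linear_scale[OF linear_orth_proj] algebra_simps)
  qed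
  then have "norm (u - x) \<le> mu (span B) W * dist u v0" if "v0 \<in> (+) a ` span B" for v0
    using PBDW_error_le_mu_dist[OF assms(1,2) v that] x by (simp add: dist_norm)
  then have "norm (u - x) / mu (span B) W \<le> infdist u ((+) a ` span B)"
    using v mu_ge_1[OF assms(1) refl assms(2)] by (intro le_infdist) (auto simp: divide_le_eq mult.commute)
  then show ?thesis
    using mu_ge_1[OF assms(1) refl assms(2)] by (simp add: divide_le_eq mult.commute)
qed

lemma sigma_admissible_ex_estimator_close_to_M:
  assumes "sigma_admissible M W K ubar Vbar \<sigma>"
    and "\<forall>k\<in>{1..K}. \<forall>w\<in>W. is_PBDW W ((+) (ubar k) ` Vbar k) w (ustar k w)"
    and "u \<in> M"
  shows "\<exists>k\<in>{1..K}. infdist (ustar k (orth_proj W u)) M \<le> \<sigma>"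
proof -
  obtain m where dims: "\<forall>k\<in>{1..K}. (\<exists>n\<le>m. fin_dim_subspace (Vbar k) n) \<and> Vbar k \<inter> orthogonal_comp W = {0}"
    using assms(1) unfolding sigma_admissible_def by (elim conjE exE) blast
  obtain Mk eps where cover: "(\<Union>k\<in>{1..K}. Mk k) = M"
    and bounds: "\<forall>k\<in>{1..K}. (\<forall>u\<in>Mk k. infdist u ((+) (ubar k) ` Vbar k) \<le> eps k) \<and>
                   mu (Vbar k) W * eps k \<le> \<sigma>"
    using assms(1) unfolding sigma_admissible_def by (elim conjE exE) blast
  obtain k where k: "k \<in> {1..K}" "u \<in> Mk k"
    using assms(3) cover by blast
  then have eps: "infdist u ((+) (ubar k) ` Vbar k) \<le> eps k" and mu_eps: "mu (Vbar k) W * eps k \<le> \<sigma>"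
    using bounds by blast+
  have dims_k: "(\<exists>n\<le>m. fin_dim_subspace (Vbar k) n) \<and> Vbar k \<inter> orthogonal_comp W = {0}"
    using dims k(1) by (rule bspec)
  then have trivial_meet: "Vbar k \<inter> orthogonal_comp W = {0}"
    by (rule conjunct2)
  obtain n where "fin_dim_subspace (Vbar k) n"
    using dims_k by blast
  then obtain B where B: "finite B" "Vbar k = span B"
    unfolding fin_dim_subspace_def by blast
  have "is_PBDW W ((+) (ubar k) ` Vbar k) (orth_proj W u) (ustar k (orth_proj W u))"
    using assms(2) k(1) orth_proj_in by blast
  then have "norm (u - ustar k (orth_proj W u)) \<le> mu (Vbar k) W * infdist u ((+) (ubar k) ` Vbar k)"
    unfolding B(2) using PBDW_error_bound[OF B(1) trivial_meet[unfolded B(2)]] by blast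
  also have "\<dots> \<le> mu (Vbar k) W * eps k"
    using eps mu_ge_1[OF B trivial_meet] by (intro mult_left_mono) auto
  also have "\<dots> \<le> \<sigma>"
    by (rule mu_eps)
  finally show ?thesis
    using k(1) assms(3) by (intro bexI[of _ k] infdist_le2) (simp_all add: dist_norm norm_minus_commute)
qed

lemma PBDW_selection_error_le_delta:
  assumes "compact M" "sigma_admissible M W K ubar Vbar \<sigma>"
    and PBDW: "\<forall>k\<in>{1..K}. \<forall>w\<in>W. is_PBDW W ((+) (ubar k) ` Vbar k) w (ustar k w)"
    and u: "u \<in> M" and r: "0 < r" "r \<le> R"
    and S: "\<forall>v. r * infdist v M \<le> S v \<and> S v \<le> R * infdist v M"
    and kstar: "\<forall>w\<in>W. kstar w \<in> {1..K} \<and> (\<forall>k\<in>{1..K}. S (ustar (kstar w) w) \<le> S (ustar k w))"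
  shows "norm (u - ustar (kstar (orth_proj W u)) (orth_proj W u)) \<le> delta M W (R / r * \<sigma>)"
proof -
  let ?w = "orth_proj W u"
  let ?x = "ustar (kstar ?w) ?w"
  obtain k where k: "k \<in> {1..K}" "infdist (ustar k ?w) M \<le> \<sigma>"
    using sigma_admissible_ex_estimator_close_to_M[OF assms(2) PBDW u] by blast
  have kstar_w: "kstar ?w \<in> {1..K}" "S ?x \<le> S (ustar k ?w)"
    using kstar k(1) orth_proj_in by blast+
  have "r * infdist ?x M \<le> R * infdist (ustar k ?w) M"
    using S kstar_w(2) by (meson order_trans)
  also have "\<dots> \<le> R * \<sigma>"
    using k(2) r by (intro mult_left_mono) simp_all
  finally have "infdist ?x M \<le> R / r * \<sigma>"
    using r(1) by (simp add: field_simps)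
  moreover have "u - ?x \<in> orthogonal_comp W"
    using PBDW_residual_orthogonal PBDW kstar_w(1) orth_proj_in by blast
  ultimately show ?thesis
    by (rule norm_le_delta[OF assms(1) u])
qed

end

theorem mainTheorem14:
  fixes M W :: "'a::{real_inner, complete_space} set"
    and K :: nat and ubar :: "nat \<Rightarrow> 'a" and Vbar :: "nat \<Rightarrow> 'a set"
    and \<sigma> :: real and ustar :: "nat \<Rightarrow> 'a \<Rightarrow> 'a"
  assumes "compact M"
    and "K \<ge> 1"
    and "\<sigma> > 0"
    and "sigma_admissible M W K ubar Vbar \<sigma>"
    and "\<forall>k\<in>{1..K}. \<forall>w\<in>W. is_PBDW W ((\<lambda>x. ubar k + x) ` Vbar k) w (ustar k w)"
  shows
    "(\<forall>kstar :: 'a \<Rightarrow> nat.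
        (\<forall>w\<in>W. kstar w \<in> {1..K} \<and>
           (\<forall>k\<in>{1..K}. infdist (ustar (kstar w) w) M \<le> infdist (ustar k w) M)) \<longrightarrow>
        (\<forall>u\<in>M. norm (u - ustar (kstar (orth_proj W u)) (orth_proj W u)) \<le> delta M W \<sigma>))
     \<and>
     (\<forall>(S :: 'a \<Rightarrow> real) (r :: real) (R :: real) (kstar :: 'a \<Rightarrow> nat).
        0 < r \<and> r \<le> R \<and> (\<forall>v. 0 \<le> S v) \<and>
        (\<forall>v. r * infdist v M \<le> S v \<and> S v \<le> R * infdist v M) \<and>
        (\<forall>w\<in>W. kstar w \<in> {1..K} \<and>
           (\<forall>k\<in>{1..K}. S (ustar (kstar w) w) \<le> S (ustar k w))) \<longrightarrow>
        (\<forall>u\<in>M. norm (u - ustar (kstar (orth_proj W u)) (orth_proj W u))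
                 \<le> delta M W ((R / r) * \<sigma>)))"
proof -
  obtain T where "finite T" "W = span T"
    using assms(4) by (rule sigma_admissible_finite_span)
  then interpret finite_dimensional_subspace W T
    by unfold_locales
  show ?thesis
  proof (intro conjI allI impI ballI)
    \<comment> \<open>Part (i) is the case \<open>S = infdist _ M\<close>, \<open>r = R = 1\<close> of part (ii).\<close>
    fix kstar :: "'a \<Rightarrow> nat" and u
    assume "\<forall>w\<in>W. kstar w \<in> {1..K} \<and>
      (\<forall>k\<in>{1..K}. infdist (ustar (kstar w) w) M \<le> infdist (ustar k w) M)" "u \<in> M"
    then show "norm (u - ustar (kstar (orth_proj W u)) (orth_proj W u)) \<le> delta M W \<sigma>"
      using PBDW_selection_error_le_delta[OF assms(1,4,5), of u 1 1 "\<lambda>v. infdist v M" kstar] by simp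
  qed (use PBDW_selection_error_le_delta[OF assms(1,4,5)] in blast)
qed

end
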